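(* Let $(G_k)_{k\in\mathbb Z}$ be a gibonacci sequence and let $F_k$ denote the Fibonacci numbers. Let $m$, $r$, $n$, $t$ be integers with $r\ge 2$ and $n\ge 1$. Then \begin{equation*} \begin{split} &F_r \sum_{j = 1}^n (-1)^{r(n - j)} F_{m - r}^{n - j} F_m^{j - 1} G_{j + t + 1} G_{j + t + 2} \cdots G_{j + t + r - 1} G_{j + t + m}\\ &\qquad = F_m^n G_{n + t + 1} G_{n + t + 2} \cdots G_{n + t + r} - (-1)^{rn} F_{m - r}^n G_{t + 1} G_{t + 2} \cdots G_{t + r}. \end{split} \end{equation*}
   Context: A gibonacci sequence $(G_k)_{k\in\mathbb Z}$ is defined by arbitrary initial values $G_0=a$, $G_1=b$ (numbers, not both zero) and $G_k=G_{k-1}+G_{k-2}$ for all integers $k$. The Fibonacci numbers $F_k$ are the gibonacci sequence with $F_0=0$, $F_1=1$, extended to all integer indices by the same recurrence. The convention $0^0=1$ is used for powers. *)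

theory Defs
  imports Complex_Main "HOL-Number_Theory.Fib"
begin

definition gibonacci :: "(int \<Rightarrow> complex) \<Rightarrow> bool" where
  "gibonacci G \<longleftrightarrow> (G 0 \<noteq> 0 \<or> G 1 \<noteq> 0) \<and> (\<forall>k. G k = G (k - 1) + G (k - 2))"

text \<open>Fibonacci numbers extended to all integer indices by the same recurrence:
  F(-k) = (-1)^(k+1) F(k).\<close>
definition fibz :: "int \<Rightarrow> int" where
  "fibz k = (if k \<ge> 0 then int (fib (nat k)) else (-1) ^ (nat (-k) + 1) * int (fib (nat (-k))))"

end

theory Submission
  imports Defs
begin

text \<open>Every sequence obeying the Fibonacci recurrence satisfies Vajda's identity
  F_r G_(k+m) = F_m G_(k+r) - (-1)^r F_(m-r) G_k: as functions of r both sides obey the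
  recurrence, and they agree at r = 0 and r = 1. Multiplying it by G_(k+1) ... G_(k+r-1)
  with k = j + t gives F_r G_(j+t+1) ... G_(j+t+r-1) G_(j+t+m) = F_m P_j - (-1)^r F_(m-r) P_(j-1),
  where P_j = G_(j+t+1) ... G_(j+t+r). With the weights ((-1)^r F_(m-r))^(n-j) F_m^(j-1)
  the sum therefore telescopes.\<close>

lemma fibz_of_nat [simp]: "fibz (int p) = int (fib p)"
  by (simp add: fibz_def)

lemma fibz_uminus_of_nat: "fibz (- int p) = (-1) ^ (p + 1) * int (fib p)"
  by (cases "p = 0") (simp_all add: fibz_def)

lemma fibz_rec: "fibz k = fibz (k - 1) + fibz (k - 2)"
proof -
  consider p where "k = int p + 2" | "k = 1" | p where "k = - int p"
  proof (cases "k \<ge> 2")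
    case True
    then have "k = int (nat (k - 2)) + 2" by simp
    then show ?thesis using that(1) by blast
  next
    case False
    then have "k = 1 \<or> k = - int (nat (- k))" by linarith
    then show ?thesis using that(2,3) by blast
  qed
  then show ?thesis
  proof cases
    case (1 p)
    then have "k = int (Suc (Suc p))" "k - 1 = int (Suc p)" "k - 2 = int p" by simp_all
    then show ?thesis by (simp only: fibz_of_nat) simp
  next
    case 2
    then show ?thesis by (simp add: fibz_def)
  next
    case (3 p)
    then have "k - 1 = - int (Suc p)" "k - 2 = - int (Suc (Suc p))" by simp_all
    then show ?thesis using 3 by (simp only: fibz_uminus_of_nat) (simp add: algebra_simps)
  qed
qed

lemma fib_recurrence_unique:
  fixes f g :: "int \<Rightarrow> 'a::ab_group_add"
  assumes f: "\<And>k. f k = f (k - 1) + f (k - 2)" and g: "\<And>k. g k = g (k - 1) + g (k - 2)"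
    and "f 0 = g 0" "f 1 = g 1"
  shows "f k = g k"
proof -
  define d where "d k = f k - g k" for k
  have d: "d k = d (k - 1) + d (k - 2)" for k
    using f[of k] g[of k] by (simp add: d_def algebra_simps)
  have "d k = 0 \<and> d (k + 1) = 0"
  proof (induction k rule: int_induct[where k = 0])
    case base
    then show ?case using assms(3,4) by (simp add: d_def)
  next
    case (step1 i)
    then show ?case using d[of "i + 2"] by (simp add: algebra_simps)
  next
    case (step2 i)
    have "d (i + 1) = d i + d (i - 1)"
      using d[of "i + 1"] by simp
    with step2.IH show ?case by auto
  qed
  then show ?thesis by (simp add: d_def)
qed

lemma of_int_fibz_rec:
  "(of_int (fibz k) :: 'a::ring_1) = of_int (fibz (k - 1)) + of_int (fibz (k - 2))"
  by (subst fibz_rec) simp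

lemma gibonacci_add:
  fixes G :: "int \<Rightarrow> 'a::comm_ring_1"
  assumes G: "\<And>k. G k = G (k - 1) + G (k - 2)"
  shows "G (k + m) = of_int (fibz m) * G (k + 1) + of_int (fibz (m - 1)) * G k"
proof -
  define g where "g j = of_int (fibz j) * G (k + 1) + of_int (fibz (j - 1)) * G k" for j
  have "G (k + m) = g m"
  proof (rule fib_recurrence_unique[where f = "\<lambda>j. G (k + j)"])
    show "G (k + j) = G (k + (j - 1)) + G (k + (j - 2))" for j
      using G[of "k + j"] by (simp add: algebra_simps)
    show "g j = g (j - 1) + g (j - 2)" for j
      unfolding g_def of_int_fibz_rec[of j] of_int_fibz_rec[of "j - 1"] by (simp add: algebra_simps)
  qed (simp_all add: g_def fibz_def)
  then show ?thesis by (simp add: g_def)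
qed

lemma minus_one_power_nat_abs: "(-1) ^ nat \<bar>k\<bar> = (if even k then 1 else (-1 :: 'a::ring_1))"
  by (simp add: minus_one_power_iff even_nat_iff)

lemma vajda_identity:
  fixes G :: "int \<Rightarrow> 'a::comm_ring_1"
  assumes G: "\<And>k. G k = G (k - 1) + G (k - 2)"
  shows "of_int (fibz r) * G (k + m)
    = of_int (fibz m) * G (k + r) - (-1) ^ nat \<bar>r\<bar> * of_int (fibz (m - r)) * G k"
proof -
  define g where
    "g j = of_int (fibz m) * G (k + j) - (-1) ^ nat \<bar>j\<bar> * of_int (fibz (m - j)) * G k" for j
  have "of_int (fibz r) * G (k + m) = g r"
  proof (rule fib_recurrence_unique[where f = "\<lambda>j. of_int (fibz j) * G (k + m)"])
    show "of_int (fibz j) * G (k + m)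
        = of_int (fibz (j - 1)) * G (k + m) + of_int (fibz (j - 2)) * G (k + m)" for j
      unfolding of_int_fibz_rec[of j] by (simp add: distrib_right)
    show "g j = g (j - 1) + g (j - 2)" for j
    proof -
      have idx: "k + j - 1 = k + (j - 1)" "k + j - 2 = k + (j - 2)"
        "m - (j - 2) - 1 = m - (j - 1)" "m - (j - 2) - 2 = m - j"
        by simp_all
      have "G (k + j) = G (k + (j - 1)) + G (k + (j - 2))"
        using G[of "k + j"] unfolding idx .
      moreover have
        "of_int (fibz (m - (j - 2))) = of_int (fibz (m - (j - 1))) + (of_int (fibz (m - j)) :: 'a)"
        using of_int_fibz_rec[of "m - (j - 2)"] unfolding idx .
      moreover have "(-1) ^ nat (\<bar>j - 1\<bar>) = - ((-1) ^ nat (\<bar>j\<bar>) :: 'a)"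
        and "(-1) ^ nat (\<bar>j - 2\<bar>) = ((-1) ^ nat (\<bar>j\<bar>) :: 'a)"
        by (simp_all add: minus_one_power_nat_abs)
      ultimately show ?thesis
        by (simp add: g_def algebra_simps)
    qed
    show "of_int (fibz 1) * G (k + m) = g 1"
      using gibonacci_add[OF G, of k m] by (simp add: g_def fibz_def)
  qed (simp add: g_def fibz_def)
  then show ?thesis by (simp add: g_def)
qed

lemma sum_weighted_telescope:
  fixes a b c :: "'a::comm_ring_1" and u P :: "int \<Rightarrow> 'a"
  assumes "\<And>j. 1 \<le> j \<Longrightarrow> j \<le> n \<Longrightarrow> a * u j = b * P j - c * P (j - 1)"
    and "0 \<le> n"
  shows "a * (\<Sum>j = 1..n. c ^ nat (n - j) * b ^ nat (j - 1) * u j)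
    = b ^ nat n * P n - c ^ nat n * P 0"
proof -
  have "a * (\<Sum>j = 1..k. c ^ nat (k - j) * b ^ nat (j - 1) * u j)
      = b ^ nat k * P k - c ^ nat k * P 0" if "0 \<le> k" "k \<le> n" for k
    using that
  proof (induction k rule: int_ge_induct)
    case base
    then show ?case by simp
  next
    case (step k)
    let ?S = "\<lambda>l. \<Sum>j = 1..l. c ^ nat (l - j) * b ^ nat (j - 1) * u j"
    have "{1..k + 1} = insert (k + 1) {1..k}"
      using step.hyps by auto
    moreover have "(\<Sum>j = 1..k. c ^ nat (k + 1 - j) * b ^ nat (j - 1) * u j) = c * ?S k"
      unfolding sum_distrib_left
    proof (rule sum.cong)
      fix j
      assume "j \<in> {1..k}"
      then have "nat (k + 1 - j) = Suc (nat (k - j))" by auto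
      then show "c ^ nat (k + 1 - j) * b ^ nat (j - 1) * u j
          = c * (c ^ nat (k - j) * b ^ nat (j - 1) * u j)"
        by simp
    qed simp
    ultimately have "?S (k + 1) = c * ?S k + b ^ nat k * u (k + 1)"
      using step.hyps by simp
    then have "a * ?S (k + 1) = c * (a * ?S k) + b ^ nat k * (a * u (k + 1))"
      by (simp add: distrib_left mult.left_commute)
    also have "\<dots> = c * (b ^ nat k * P k - c ^ nat k * P 0) + b ^ nat k * (b * P (k + 1) - c * P k)"
      using step.IH step.prems assms(1)[of "k + 1"] step.hyps by simp
    also have "\<dots> = b ^ nat (k + 1) * P (k + 1) - c ^ nat (k + 1) * P 0"
      using step.hyps by (simp add: nat_add_distrib algebra_simps)
    finally show ?case .
  qed
  then show ?thesis using \<open>0 \<le> n\<close> by blast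
qed

lemma vajda_identity_prod:
  fixes G :: "int \<Rightarrow> 'a::comm_ring_1"
  assumes G: "\<And>k. G k = G (k - 1) + G (k - 2)" and "1 \<le> r"
  shows "of_int (fibz r) * ((\<Prod>i = 1..r - 1. G (k + i)) * G (k + m))
    = of_int (fibz m) * (\<Prod>i = 1..r. G (k + i))
      - (-1) ^ nat r * of_int (fibz (m - r)) * (\<Prod>i = 1..r. G (k - 1 + i))"
proof -
  let ?Q = "\<Prod>i = 1..r - 1. G (k + i)"
  have "{1..r} = insert r {1..r - 1}"
    using \<open>1 \<le> r\<close> by auto
  then have last: "(\<Prod>i = 1..r. G (k + i)) = G (k + r) * ?Q"
    by simp
  have "(\<Prod>i = 1..r. G (k - 1 + i)) = (\<Prod>i = 0..r - 1. G (k + i))"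
    by (rule prod.reindex_bij_witness[where i = "\<lambda>i. i + 1" and j = "\<lambda>i. i - 1"])
      (auto simp: algebra_simps)
  also have "{0..r - 1} = insert 0 {1..r - 1}"
    using \<open>1 \<le> r\<close> by auto
  finally have first: "(\<Prod>i = 1..r. G (k - 1 + i)) = G k * ?Q"
    by simp
  have "of_int (fibz r) * (?Q * G (k + m)) = ?Q * (of_int (fibz r) * G (k + m))"
    by (simp add: ac_simps)
  also have "\<dots> = ?Q * (of_int (fibz m) * G (k + r) - (-1) ^ nat r * of_int (fibz (m - r)) * G k)"
    using vajda_identity[OF G, of r k m] \<open>1 \<le> r\<close> by simp
  finally show ?thesis
    unfolding last first by (simp add: algebra_simps)
qed

theorem proposition6:
  fixes G :: "int \<Rightarrow> complex" and m r n t :: int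
  assumes "gibonacci G" and "r \<ge> 2" and "n \<ge> 1"
  shows "of_int (fibz r) * (\<Sum>j = 1..n.
            (-1) ^ nat (r * (n - j)) * of_int (fibz (m - r)) ^ nat (n - j)
            * of_int (fibz m) ^ nat (j - 1)
            * (\<Prod>i = 1..r - 1. G (j + t + i)) * G (j + t + m))
       = of_int (fibz m) ^ nat n * (\<Prod>i = 1..r. G (n + t + i))
         - (-1) ^ nat (r * n) * of_int (fibz (m - r)) ^ nat n * (\<Prod>i = 1..r. G (t + i))"
proof -
  have G: "\<And>k. G k = G (k - 1) + G (k - 2)"
    using \<open>gibonacci G\<close> unfolding gibonacci_def by blast
  define P where "P j = (\<Prod>i = 1..r. G (j + t + i))" for j
  define c :: complex where "c = (-1) ^ nat r * of_int (fibz (m - r))"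
  have c_power: "c ^ nat k = (-1) ^ nat (r * k) * of_int (fibz (m - r)) ^ nat k" if "0 \<le> k" for k
    using that \<open>r \<ge> 2\<close> by (simp add: c_def power_mult_distrib power_mult nat_mult_distrib)
  have "of_int (fibz r) * ((\<Prod>i = 1..r - 1. G (j + t + i)) * G (j + t + m))
      = of_int (fibz m) * P j - c * P (j - 1)" for j
    using vajda_identity_prod[OF G, of r "j + t" m] \<open>r \<ge> 2\<close>
    by (simp add: P_def c_def algebra_simps)
  then have "of_int (fibz r) * (\<Sum>j = 1..n. c ^ nat (n - j) * of_int (fibz m) ^ nat (j - 1)
        * ((\<Prod>i = 1..r - 1. G (j + t + i)) * G (j + t + m)))
      = of_int (fibz m) ^ nat n * P n - c ^ nat n * P 0"
    using \<open>n \<ge> 1\<close> by (intro sum_weighted_telescope) auto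
  moreover have "(\<Sum>j = 1..n. c ^ nat (n - j) * of_int (fibz m) ^ nat (j - 1)
        * ((\<Prod>i = 1..r - 1. G (j + t + i)) * G (j + t + m)))
      = (\<Sum>j = 1..n. (-1) ^ nat (r * (n - j)) * of_int (fibz (m - r)) ^ nat (n - j)
        * of_int (fibz m) ^ nat (j - 1) * (\<Prod>i = 1..r - 1. G (j + t + i)) * G (j + t + m))"
    by (rule sum.cong) (simp_all add: c_power mult.assoc)
  ultimately show ?thesis
    using \<open>n \<ge> 1\<close> by (simp add: P_def c_power)
qed

end
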